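(* If $q$ is a power of an odd prime, then $\chi(G_{q^3})\le 6q^2$; consequently $\chi(ER_{q^3})\le 6q^2+1$.
   Context: For a power $Q$ of an odd prime, the graph $G_Q$ has vertex set $\mathbb{F}_Q\times\mathbb{F}_Q$, and distinct vertices $(x_1,x_2)$, $(y_1,y_2)$ are adjacent if and only if $(x_1+y_1)^2=x_2+y_2$; $G_Q$ has no loops. $ER_Q$ is the graph whose vertices are the $1$-dimensional subspaces of $\mathbb{F}_Q^3$, where distinct vertices $(x_0,x_1,x_2)$, $(y_0,y_1,y_2)$ (homogeneous coordinates) are adjacent if and only if $x_0y_0+x_1y_1+x_2y_2=0$. $\chi$ denotes the chromatic number. *)

theory Defs
  imports "HOL-Computational_Algebra.Primes"
begin

definition colorable :: "'v set \<Rightarrow> ('v \<Rightarrow> 'v \<Rightarrow> bool) \<Rightarrow> nat \<Rightarrow> bool" where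
  "colorable V E n \<longleftrightarrow>
     (\<exists>f :: 'v \<Rightarrow> nat. (\<forall>v\<in>V. f v < n) \<and> (\<forall>u\<in>V. \<forall>v\<in>V. E u v \<longrightarrow> f u \<noteq> f v))"

definition chromatic_number :: "'v set \<Rightarrow> ('v \<Rightarrow> 'v \<Rightarrow> bool) \<Rightarrow> nat" where
  "chromatic_number V E = (LEAST n. colorable V E n)"

definition G_adj :: "('a::field \<times> 'a) \<Rightarrow> ('a \<times> 'a) \<Rightarrow> bool" where
  "G_adj x y \<longleftrightarrow> x \<noteq> y \<and> (fst x + fst y)^2 = snd x + snd y"

definition dot3 :: "('a::field \<times> 'a \<times> 'a) \<Rightarrow> ('a \<times> 'a \<times> 'a) \<Rightarrow> 'a" where
  "dot3 x y = fst x * fst y + fst (snd x) * fst (snd y) + snd (snd x) * snd (snd y)"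

definition line3 :: "('a::field \<times> 'a \<times> 'a) \<Rightarrow> ('a \<times> 'a \<times> 'a) set" where
  "line3 v = {(c * fst v, c * fst (snd v), c * snd (snd v)) | c. True}"

definition ER_vertices :: "('a::field \<times> 'a \<times> 'a) set set" where
  "ER_vertices = {line3 v | v. v \<noteq> (0, 0, 0)}"

definition ER_adj :: "('a::field \<times> 'a \<times> 'a) set \<Rightarrow> ('a \<times> 'a \<times> 'a) set \<Rightarrow> bool" where
  "ER_adj X Y \<longleftrightarrow> X \<noteq> Y \<and> (\<forall>x\<in>X. \<forall>y\<in>Y. dot3 x y = 0)"

end

theory Submission
  imports Defs "HOL-Computational_Algebra.Polynomial" "HOL-Library.Countable"
begin

text \<open>Completing the square maps \<open>G_Q\<close> homomorphically into the graph \<open>core_adj\<close> on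
  \<open>F_Q \<times> F_Q\<close>, in which \<open>(a, z)\<close> and \<open>(b, w)\<close> are adjacent iff \<open>z + w = a b\<close>. If
  \<open>-1 = a\<^sup>2 + b\<^sup>2\<close> in \<open>F_Q\<close>, a linear change of coordinates turns \<open>dot3\<close> into a hyperbolic form;
  then \<open>ER_Q\<close> splits into an affine chart mapping into \<open>core_adj\<close>, an independent set (one
  extra colour) and a set of vertices isolated from both.

  To colour \<open>core_adj\<close> over \<open>F_{q\<^sup>3}\<close>, let \<open>K = F_q\<close> be the fixed field of \<open>x \<mapsto> x\<^sup>q\<close> and
  \<open>l\<close> a fixed representative of the coset \<open>a K\<^sup>*\<close>. A vertex \<open>(a, z)\<close> with \<open>z \<in> l\<^sup>2 K\<close> gets
  the colour \<open>(a / l, z / l\<^sup>2) \<in> K\<^sup>2\<close>: two adjacent such vertices with the same colour would make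
  \<open>l / m\<close> a root of a quadratic over \<open>K\<close>, hence an element of \<open>K\<close> because the extension has odd
  degree, which forces \<open>l = m\<close>. Every other vertex gets the colour \<open>(l, \<epsilon>)\<close>, where \<open>\<epsilon>\<close> records
  which of the two distinct cosets \<open>\<plusminus>z + l\<^sup>2 K\<close> comes first in a fixed enumeration of the field;
  an edge between two such vertices with the same \<open>l\<close> forces \<open>w \<in> -z + l\<^sup>2 K\<close>, which flips
  \<open>\<epsilon>\<close>. Altogether \<open>q\<^sup>2 + 2 (q\<^sup>2 + q + 2) \<le> 6 q\<^sup>2\<close> colours suffice.\<close>

section \<open>Colourings\<close>

lemma chromatic_number_le: "colorable V E n \<Longrightarrow> chromatic_number V E \<le> n"
  unfolding chromatic_number_def by (rule Least_le)

lemma colorable_pullback: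
  assumes "colorable W E' n" and "h ` V \<subseteq> W"
    and "\<And>u v. u \<in> V \<Longrightarrow> v \<in> V \<Longrightarrow> E u v \<Longrightarrow> E' (h u) (h v)"
  shows "colorable V E n"
proof -
  obtain f where "\<forall>w\<in>W. f w < n" "\<forall>u\<in>W. \<forall>v\<in>W. E' u v \<longrightarrow> f u \<noteq> f v"
    using assms(1) by (auto simp: colorable_def)
  then show ?thesis
    unfolding colorable_def using assms(2,3)
    by (intro exI[of _ "f \<circ> h"]) (auto simp: image_subset_iff)
qed

lemma colorable_Un_isolated:
  assumes "colorable A E n" and "0 < n"
    and "\<And>u v. u \<in> C \<Longrightarrow> v \<in> A \<union> C \<Longrightarrow> \<not> E u v \<and> \<not> E v u"
  shows "colorable (A \<union> C) E n"
proof -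
  obtain f where f: "\<forall>v\<in>A. f v < n" "\<forall>u\<in>A. \<forall>v\<in>A. E u v \<longrightarrow> f u \<noteq> f v"
    using assms(1) by (auto simp: colorable_def)
  show ?thesis
    unfolding colorable_def
  proof (intro exI[of _ "\<lambda>v. if v \<in> C then 0 else f v"] conjI ballI impI)
    fix u v assume "u \<in> A \<union> C" "v \<in> A \<union> C" "E u v"
    with assms(3) have "u \<notin> C" "v \<notin> C" by blast+
    with f \<open>u \<in> A \<union> C\<close> \<open>v \<in> A \<union> C\<close> \<open>E u v\<close>
    show "(if u \<in> C then 0 else f u) \<noteq> (if v \<in> C then 0 else f v)" by auto
  qed (use f assms(2) in auto)
qed

lemma colorable_Un_independent:
  assumes "colorable A E n" and "\<And>u v. u \<in> B \<Longrightarrow> v \<in> B \<Longrightarrow> \<not> E u v"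
  shows "colorable (A \<union> B) E (Suc n)"
proof -
  obtain f where f: "\<forall>v\<in>A. f v < n" "\<forall>u\<in>A. \<forall>v\<in>A. E u v \<longrightarrow> f u \<noteq> f v"
    using assms(1) by (auto simp: colorable_def)
  show ?thesis
    unfolding colorable_def
  proof (intro exI[of _ "\<lambda>v. if v \<in> A then f v else n"] conjI ballI impI)
    fix u v assume "u \<in> A \<union> B" "v \<in> A \<union> B" "E u v"
    then show "(if u \<in> A then f u else n) \<noteq> (if v \<in> A then f v else n)"
      using f assms(2)[of u v] by (metis Un_iff nat_neq_iff)
  qed (use f in auto)
qed

lemma colorable_of_palette:
  assumes "finite P" and "card P \<le> n" and "f ` V \<subseteq> P"
    and "\<And>u v. u \<in> V \<Longrightarrow> v \<in> V \<Longrightarrow> E u v \<Longrightarrow> f u \<noteq> f v"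
  shows "colorable V E n"
proof -
  obtain g where g: "bij_betw g P {0..<card P}"
    using ex_bij_betw_finite_nat[OF assms(1)] by blast
  have "g (f v) < n" if "v \<in> V" for v
    using bij_betwE[OF g] assms(2,3) that by fastforce
  moreover have "g (f u) \<noteq> g (f v)" if "u \<in> V" "v \<in> V" "E u v" for u v
    using assms(3) assms(4)[OF that] that bij_betw_imp_inj_on[OF g] by (auto dest: inj_onD)
  ultimately show ?thesis
    unfolding colorable_def by (intro exI[of _ "g \<circ> f"]) auto
qed

section \<open>Reducing \<open>G_Q\<close> and \<open>ER_Q\<close> to \<open>core_adj\<close>\<close>

definition core_adj :: "'a::field \<times> 'a \<Rightarrow> 'a \<times> 'a \<Rightarrow> bool" where
  "core_adj u v \<longleftrightarrow> u \<noteq> v \<and> snd u + snd v = fst u * fst v"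

lemma colorable_G_adj_if_core:
  assumes two: "(2::'a::field) \<noteq> 0" and "colorable (UNIV :: ('a \<times> 'a) set) core_adj n"
  shows "colorable (UNIV :: ('a \<times> 'a) set) G_adj n"
proof (rule colorable_pullback[OF assms(2)])
  fix u v :: "'a \<times> 'a"
  assume "G_adj u v"
  then have "u \<noteq> v" and sq: "(fst u + fst v)^2 = snd u + snd v" by (auto simp: G_adj_def)
  \<comment> \<open>completing the square turns \<open>(x\<^sub>1 + y\<^sub>1)\<^sup>2 = x\<^sub>2 + y\<^sub>2\<close> into \<open>z + w = a b\<close>\<close>
  let ?h = "\<lambda>x::'a \<times> 'a. (2 * fst x, 2 * (snd x - fst x ^ 2))"
  have "?h u \<noteq> ?h v"
    using \<open>u \<noteq> v\<close> two by (auto simp: prod_eq_iff)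
  moreover have "2 * (snd u - fst u ^ 2) + 2 * (snd v - fst v ^ 2)
      = 2 * ((snd u + snd v) - (fst u + fst v)^2) + 2 * fst u * (2 * fst v)"
    by (simp add: algebra_simps power2_eq_square)
  ultimately show "core_adj (?h u) (?h v)"
    using sq by (simp add: core_adj_def)
qed simp

definition scale3 :: "'a::field \<Rightarrow> 'a \<times> 'a \<times> 'a \<Rightarrow> 'a \<times> 'a \<times> 'a" where
  "scale3 t x = (t * fst x, t * fst (snd x), t * snd (snd x))"

lemma self_in_line3: "v \<in> line3 v"
  unfolding line3_def by (intro CollectI exI[of _ 1]) simp

lemma line3_scale3:
  assumes "t \<noteq> 0"
  shows "line3 (scale3 t v) = line3 v"
proof -
  have "(\<exists>c. x = scale3 c (scale3 t v)) \<longleftrightarrow> (\<exists>c. x = scale3 c v)" for x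
    using assms by (metis (no_types, lifting) scale3_def mult.assoc nonzero_eq_divide_eq fst_conv snd_conv)
  then show ?thesis
    by (auto simp: line3_def scale3_def)
qed

definition line_rep :: "('a::field \<times> 'a \<times> 'a) set \<Rightarrow> 'a \<times> 'a \<times> 'a" where
  "line_rep X = (SOME x. x \<in> X \<and> x \<noteq> (0, 0, 0))"

lemma line_rep:
  assumes "X \<in> ER_vertices"
  shows "line_rep X \<noteq> (0, 0, 0)" and "line3 (line_rep X) = X"
proof -
  obtain v where X: "X = line3 v" and "v \<noteq> (0, 0, 0)"
    using assms by (auto simp: ER_vertices_def)
  then have "\<exists>x. x \<in> X \<and> x \<noteq> (0, 0, 0)"
    using self_in_line3 by blast
  then have x: "line_rep X \<in> X" "line_rep X \<noteq> (0, 0, 0)"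
    unfolding line_rep_def by (metis (mono_tags, lifting) someI_ex)+
  then show "line_rep X \<noteq> (0, 0, 0)" by simp
  obtain c where "line_rep X = scale3 c v"
    using x(1) X by (auto simp: line3_def scale3_def)
  moreover have "c \<noteq> 0"
    using x(2) calculation by (auto simp: scale3_def)
  ultimately show "line3 (line_rep X) = X"
    using X line3_scale3 by simp
qed

definition hyp_form :: "'a::field \<times> 'a \<times> 'a \<Rightarrow> 'a \<times> 'a \<times> 'a \<Rightarrow> 'a" where
  "hyp_form u v = fst (snd u) * fst (snd v) - fst u * snd (snd v) - snd (snd u) * fst v"

text \<open>For \<open>a\<^sup>2 + b\<^sup>2 = -1\<close> the vectors \<open>(a, b, 1)\<close> and \<open>(-a, -b, 1)\<close> are isotropic for \<open>dot3\<close>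
  and \<open>(-b, a, 0)\<close> is orthogonal to both; pairing with these three vectors turns \<open>dot3\<close>
  into the hyperbolic form \<open>- hyp_form\<close>.\<close>

definition hyp_coords :: "'a::field \<Rightarrow> 'a \<Rightarrow> 'a \<times> 'a \<times> 'a \<Rightarrow> 'a \<times> 'a \<times> 'a" where
  "hyp_coords a b x =
     ((- a * fst x - b * fst (snd x) + snd (snd x)) / 2,
      - b * fst x + a * fst (snd x),
      a * fst x + b * fst (snd x) + snd (snd x))"

lemma four_neq_zero: "(2::'a::field) \<noteq> 0 \<Longrightarrow> (4::'a) \<noteq> 0"
  using mult_eq_0_iff[of "2::'a" 2] by simp

lemma hyp_form_hyp_coords:
  fixes a b :: "'a::field"
  assumes ab: "a^2 + b^2 = -1" and two: "(2::'a) \<noteq> 0"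
  shows "hyp_form (hyp_coords a b x) (hyp_coords a b y) = - dot3 x y"
proof -
  have "hyp_form (hyp_coords a b x) (hyp_coords a b y) + dot3 x y
      = (a^2 + b^2 + 1) * (fst x * fst y + fst (snd x) * fst (snd y))"
    using two four_neq_zero[OF two] by (simp add: hyp_form_def hyp_coords_def dot3_def field_simps power2_eq_square)
  then show ?thesis
    using ab by (simp add: eq_neg_iff_add_eq_0)
qed

lemma hyp_coords_scale3: "hyp_coords a b (scale3 t x) = scale3 t (hyp_coords a b x)"
  by (simp add: hyp_coords_def scale3_def algebra_simps)

lemma inj_hyp_coords:
  fixes a b :: "'a::field"
  assumes ab: "a^2 + b^2 = -1" and two: "(2::'a) \<noteq> 0"
  shows "inj (hyp_coords a b)"
proof (rule inj_on_inverseI)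
  fix x :: "'a \<times> 'a \<times> 'a"
  let ?u = "hyp_coords a b x"
  have "a * fst ?u + b * fst (snd ?u) - a / 2 * snd (snd ?u) = fst x - (a^2 + b^2 + 1) * fst x"
    and "b * fst ?u - a * fst (snd ?u) - b / 2 * snd (snd ?u)
      = fst (snd x) - (a^2 + b^2 + 1) * fst (snd x)"
    and "fst ?u + snd (snd ?u) / 2 = snd (snd x)"
    using two four_neq_zero[OF two] by (simp_all add: hyp_coords_def field_simps power2_eq_square)
  then show "(\<lambda>u. (a * fst u + b * fst (snd u) - a / 2 * snd (snd u),
      b * fst u - a * fst (snd u) - b / 2 * snd (snd u), fst u + snd (snd u) / 2)) ?u = x"
    using ab by (simp add: prod_eq_iff)
qed

lemma dot3_commute: "dot3 x y = dot3 y x"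
  by (simp add: dot3_def mult.commute)

lemma ER_adj_commute: "ER_adj X Y \<longleftrightarrow> ER_adj Y X"
  unfolding ER_adj_def by (metis dot3_commute)

definition ER_coords :: "'a::field \<Rightarrow> 'a \<Rightarrow> ('a \<times> 'a \<times> 'a) set \<Rightarrow> 'a \<times> 'a \<times> 'a" where
  "ER_coords a b X = hyp_coords a b (line_rep X)"

context
  fixes a b :: "'a::field"
  assumes ab: "a^2 + b^2 = -1" and two: "(2::'a) \<noteq> 0"
begin

lemma ER_coords_nonzero:
  assumes "X \<in> ER_vertices"
  shows "ER_coords a b X \<noteq> (0, 0, 0)"
proof
  assume "ER_coords a b X = (0, 0, 0)"
  also have "(0, 0, 0) = hyp_coords a b (0, 0, 0)"
    by (simp add: hyp_coords_def)
  finally show False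
    using line_rep(1)[OF assms] inj_hyp_coords[OF ab two] by (auto simp: ER_coords_def dest: injD)
qed

lemma hyp_form_ER_coords_if_ER_adj:
  assumes "X \<in> ER_vertices" "Y \<in> ER_vertices" "ER_adj X Y"
  shows "hyp_form (ER_coords a b X) (ER_coords a b Y) = 0"
proof -
  have "line_rep X \<in> X" "line_rep Y \<in> Y"
    using line_rep(2) assms(1,2) self_in_line3 by metis+
  then have "dot3 (line_rep X) (line_rep Y) = 0"
    using assms(3) by (auto simp: ER_adj_def)
  then show ?thesis
    by (simp add: ER_coords_def hyp_form_hyp_coords[OF ab two])
qed

lemma ER_vertex_eq_if_ER_coords_proportional:
  assumes "X \<in> ER_vertices" "Y \<in> ER_vertices"
    and "ER_coords a b X = scale3 t (ER_coords a b Y)"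
  shows "X = Y"
proof -
  have "line_rep X = scale3 t (line_rep Y)"
    using assms(3) inj_hyp_coords[OF ab two]
    by (auto simp: ER_coords_def simp flip: hyp_coords_scale3 dest: injD)
  moreover from this have "t \<noteq> 0"
    using line_rep(1)[OF assms(1)] by (auto simp: scale3_def)
  ultimately show ?thesis
    using line_rep(2) assms(1,2) line3_scale3 by metis
qed

text \<open>On the affine chart where the first hyperbolic coordinate is nonzero, orthogonality becomes
  adjacency in \<open>core_adj\<close>.\<close>

lemma colorable_ER_adj_affine_chart:
  assumes core: "colorable (UNIV :: ('a \<times> 'a) set) core_adj n"
  shows "colorable {X \<in> ER_vertices. fst (ER_coords a b X) \<noteq> 0} ER_adj n"
proof (rule colorable_pullback[OF core])
  let ?u = "ER_coords a b"
  let ?h = "\<lambda>X. (fst (snd (?u X)) / fst (?u X), snd (snd (?u X)) / fst (?u X))"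
  fix X Y
  assume X: "X \<in> {X \<in> ER_vertices. fst (?u X) \<noteq> 0}" and Y: "Y \<in> {X \<in> ER_vertices. fst (?u X) \<noteq> 0}"
    and XY: "ER_adj X Y"
  have "?h X \<noteq> ?h Y"
  proof
    assume "?h X = ?h Y"
    then have "?u X = scale3 (fst (?u X) / fst (?u Y)) (?u Y)"
      using X Y by (auto simp: scale3_def prod_eq_iff field_simps)
    then show False
      using ER_vertex_eq_if_ER_coords_proportional X Y XY by (auto simp: ER_adj_def)
  qed
  moreover have "snd (?h X) + snd (?h Y) = fst (?h X) * fst (?h Y)"
    using hyp_form_ER_coords_if_ER_adj[of X Y] X Y XY by (auto simp: hyp_form_def field_simps)
  ultimately show "core_adj (?h X) (?h Y)"
    by (simp add: core_adj_def)
qed simp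

lemma not_ER_adj_if_first_coords_zero:
  assumes X: "X \<in> ER_vertices" "fst (ER_coords a b X) = 0" "fst (snd (ER_coords a b X)) = 0"
    and Y: "Y \<in> ER_vertices" "fst (ER_coords a b Y) \<noteq> 0 \<or> fst (snd (ER_coords a b Y)) = 0"
  shows "\<not> ER_adj X Y"
proof
  let ?u = "ER_coords a b"
  assume XY: "ER_adj X Y"
  have "snd (snd (?u X)) \<noteq> 0"
    using X ER_coords_nonzero by (auto simp: prod_eq_iff)
  show False
  proof (cases "fst (?u Y) = 0")
    case True
    with Y have "snd (snd (?u Y)) \<noteq> 0"
      using ER_coords_nonzero by (auto simp: prod_eq_iff)
    with X Y True have "?u X = scale3 (snd (snd (?u X)) / snd (snd (?u Y))) (?u Y)"
      by (auto simp: scale3_def prod_eq_iff)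
    then show False
      using ER_vertex_eq_if_ER_coords_proportional X Y XY by (auto simp: ER_adj_def)
  next
    case False
    then show False
      using hyp_form_ER_coords_if_ER_adj[of X Y] X Y XY \<open>snd (snd (?u X)) \<noteq> 0\<close>
      by (auto simp: hyp_form_def)
  qed
qed

lemma colorable_ER_adj_if_core:
  assumes core: "colorable (UNIV :: ('a \<times> 'a) set) core_adj n"
  shows "colorable (ER_vertices :: ('a \<times> 'a \<times> 'a) set set) ER_adj (Suc n)"
proof -
  let ?u = "ER_coords a b"
  define A where "A = {X \<in> ER_vertices. fst (?u X) \<noteq> 0}"
  define C where "C = {X \<in> ER_vertices. fst (?u X) = 0 \<and> fst (snd (?u X)) = 0}"
  define B where "B = {X \<in> ER_vertices. fst (?u X) = 0 \<and> fst (snd (?u X)) \<noteq> 0}"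
  have "colorable A ER_adj n"
    unfolding A_def by (rule colorable_ER_adj_affine_chart[OF core])
  moreover have "0 < n"
    using core by (auto simp: colorable_def intro: gr0I)
  moreover have "\<not> ER_adj X Y" if "X \<in> C" "Y \<in> A \<union> C" for X Y
    using not_ER_adj_if_first_coords_zero that by (auto simp: A_def C_def)
  ultimately have "colorable (A \<union> C) ER_adj n"
    using colorable_Un_isolated ER_adj_commute by metis
  moreover have "\<not> ER_adj X Y" if "X \<in> B" "Y \<in> B" for X Y
    using hyp_form_ER_coords_if_ER_adj[of X Y] that by (auto simp: B_def hyp_form_def)
  moreover have "ER_vertices = (A \<union> C) \<union> B"
    by (auto simp: A_def B_def C_def)
  ultimately show ?thesis
    using colorable_Un_independent by metis
qed

end

section \<open>Finite fields\<close>

text \<open>The library proves this for the class \<open>finite_field\<close>, of which the sort \<open>{field, finite}\<close>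
  is not syntactically a subclass.\<close>

lemma power_card_UNIV_eq:
  fixes x :: "'a::{field,finite}"
  shows "x ^ card (UNIV :: 'a set) = x"
proof (cases "x = 0")
  case False
  have "x * (\<Prod>y\<in>UNIV-{0}. x * y) = x * x ^ (card (UNIV :: 'a set) - 1) * \<Prod>(UNIV-{0})"
    by (simp add: prod.distrib mult_ac)
  also have "x * x ^ (card (UNIV :: 'a set) - 1) = x ^ card (UNIV :: 'a set)"
    using finite_UNIV_card_ge_0[where ?'a = 'a] by (simp flip: power_Suc)
  also have "(\<Prod>y\<in>UNIV-{0}. x * y) = (\<Prod>y\<in>UNIV-{0}. y)"
    by (rule prod.reindex_bij_witness[of _ "\<lambda>y. y / x" "\<lambda>y. x * y"]) (use False in auto)
  finally show ?thesis
    by simp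
qed (use finite_UNIV_card_ge_0[where ?'a = 'a] in auto)

lemma of_nat_card_UNIV_eq_0: "of_nat (card (UNIV :: 'a::{ring_1,finite} set)) = (0::'a)"
proof -
  have "(\<Sum>y\<in>UNIV. y + 1) = (\<Sum>y::'a\<in>UNIV. y)"
    by (rule sum.reindex_bij_witness[of _ "\<lambda>y. y - 1" "\<lambda>y. y + 1"]) auto
  then show ?thesis
    by (simp add: sum.distrib)
qed

lemma CHAR_dvd_card_UNIV: "CHAR('a::{ring_1,finite}) dvd card (UNIV :: 'a set)"
  using of_nat_card_UNIV_eq_0 of_nat_eq_0_iff_char_dvd by blast

lemma CHAR_eq_if_card_UNIV_eq_prime_power:
  assumes "prime p" and "card (UNIV :: 'a::{field,finite} set) = p ^ n"
  shows "CHAR('a) = p"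
proof -
  have "prime CHAR('a)"
    using prime_CHAR_semidom finite_imp_CHAR_pos[OF finite_UNIV] by blast
  moreover have "CHAR('a) dvd p ^ n"
    using CHAR_dvd_card_UNIV assms(2) by metis
  ultimately show ?thesis
    using assms(1) prime_dvd_power primes_dvd_imp_eq by metis
qed

lemma two_neq_zero_if_odd_card:
  assumes "odd (card (UNIV :: 'a::{field,finite} set))"
  shows "(2::'a) \<noteq> 0"
proof
  assume "(2::'a) = 0"
  then have "CHAR('a) dvd 2"
    using of_nat_eq_0_iff_char_dvd[of 2, where ?'a = 'a] by simp
  moreover have "prime CHAR('a)"
    using prime_CHAR_semidom finite_imp_CHAR_pos[OF finite_UNIV] by blast
  ultimately have "CHAR('a) = 2"
    using primes_dvd_imp_eq two_is_prime_nat by blast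
  then show False
    using CHAR_dvd_card_UNIV[where ?'a = 'a] assms by simp
qed

lemma card_UNIV_le_twice_card_squares:
  "card (UNIV :: 'a::{field,finite} set) \<le> 2 * card (range (\<lambda>x::'a. x^2))"
proof -
  have fibre: "card {x::'a. x^2 = s} \<le> 2" if "s \<in> range (\<lambda>x::'a. x^2)" for s
  proof -
    from that obtain r where "s = r^2" by auto
    then have "card {x::'a. x^2 = s} \<le> card {r, -r}"
      by (intro card_mono) (auto simp: power2_eq_iff)
    also have "\<dots> \<le> 2"
      by (simp add: card_insert_if)
    finally show ?thesis .
  qed
  have "(UNIV::'a set) = (\<Union>s\<in>range (\<lambda>x::'a. x^2). {x. x^2 = s})"
    by auto
  then have "card (UNIV :: 'a set) \<le> (\<Sum>s\<in>range (\<lambda>x::'a. x^2). card {x::'a. x^2 = s})"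
    by (metis card_UN_le finite)
  also have "\<dots> \<le> (\<Sum>s\<in>range (\<lambda>x::'a. x^2). 2)"
    using fibre by (rule sum_mono)
  finally show ?thesis
    by simp
qed

text \<open>The squares and the values \<open>-1 - b\<^sup>2\<close> each occupy at least half of a field of odd order,
  so they must meet.\<close>

lemma minus_one_eq_sum_two_squares:
  assumes "odd (card (UNIV :: 'a::{field,finite} set))"
  obtains a b :: "'a::{field,finite}" where "a^2 + b^2 = -1"
proof -
  let ?S = "range (\<lambda>x::'a. x^2)"
  let ?T = "(\<lambda>s. -1 - s) ` ?S"
  have "card ?T = card ?S"
    by (rule card_image) (auto simp: inj_on_def)
  moreover have "card (?S \<union> ?T) \<le> card (UNIV :: 'a set)"
    by (rule card_mono) auto
  ultimately have "?S \<inter> ?T \<noteq> {}"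
  proof (intro notI)
    assume "card ?T = card ?S" "card (?S \<union> ?T) \<le> card (UNIV :: 'a set)" "?S \<inter> ?T = {}"
    then have "2 * card ?S \<le> card (UNIV :: 'a set)"
      using card_Un_disjoint[of ?S ?T] by simp
    then have "card (UNIV :: 'a set) = 2 * card ?S"
      using card_UNIV_le_twice_card_squares[where ?'a = 'a] by linarith
    then show False
      using assms by simp
  qed
  then obtain a b :: 'a where "a^2 = -1 - b^2"
    by auto
  then show ?thesis
    using that[of a b] by (simp add: algebra_simps)
qed

lemma card_roots_le_degree:
  fixes p :: "'a::idom poly"
  assumes "p \<noteq> 0" and "S \<subseteq> {x. poly p x = 0}"
  shows "card S \<le> degree p"
proof -
  have "card S \<le> card {x. poly p x = 0}"
    using assms(2) by (rule card_mono[OF poly_roots_finite[OF assms(1)]])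
  then show ?thesis
    using card_poly_roots_bound[OF assms(1)] by linarith
qed

section \<open>The fixed field of a Frobenius power\<close>

text \<open>The parameter \<open>field\<close> only fixes the type of the field.\<close>

locale additive_power =
  fixes q :: nat and field :: "'a::field itself"
  assumes power_add: "((x::'a) + y) ^ q = x ^ q + y ^ q"
    and q_pos: "0 < q"
begin

definition fixed_field :: "'a set" where
  "fixed_field = {x. x ^ q = x}"

lemma power_uminus: "(- (x::'a)) ^ q = - (x ^ q)"
proof -
  have "0 = (x + - x) ^ q"
    using q_pos by simp
  also have "\<dots> = x ^ q + (- x) ^ q"
    by (rule power_add)
  finally show ?thesis
    by (simp add: eq_neg_iff_add_eq_0 add.commute)
qed

lemma fixed_field_zero [simp, intro]: "(0::'a) \<in> fixed_field"
  using q_pos by (simp add: fixed_field_def)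

lemma fixed_field_one [simp, intro]: "(1::'a) \<in> fixed_field"
  by (simp add: fixed_field_def)

lemma fixed_field_add [intro]: "x \<in> fixed_field \<Longrightarrow> y \<in> fixed_field \<Longrightarrow> x + y \<in> fixed_field"
  by (simp add: fixed_field_def power_add)

lemma fixed_field_uminus [intro]: "x \<in> fixed_field \<Longrightarrow> - x \<in> fixed_field"
  by (simp add: fixed_field_def power_uminus)

lemma fixed_field_diff [intro]: "x \<in> fixed_field \<Longrightarrow> y \<in> fixed_field \<Longrightarrow> x - y \<in> fixed_field"
  using fixed_field_add[of x "- y"] fixed_field_uminus[of y] by simp

lemma fixed_field_mult [intro]: "x \<in> fixed_field \<Longrightarrow> y \<in> fixed_field \<Longrightarrow> x * y \<in> fixed_field"
  by (simp add: fixed_field_def power_mult_distrib)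

lemma fixed_field_inverse [intro]: "x \<in> fixed_field \<Longrightarrow> inverse x \<in> fixed_field"
  by (simp add: fixed_field_def power_inverse)

lemma fixed_field_divide [intro]: "x \<in> fixed_field \<Longrightarrow> y \<in> fixed_field \<Longrightarrow> x / y \<in> fixed_field"
  by (simp add: divide_inverse fixed_field_mult fixed_field_inverse)

definition coset_rep :: "'a \<Rightarrow> 'a" where
  "coset_rep a = (SOME l. \<exists>t \<in> fixed_field - {0}. l = t * a)"

lemma coset_rep: "\<exists>t \<in> fixed_field - {0}. coset_rep a = t * a"
  unfolding coset_rep_def by (rule someI_ex) (use fixed_field_one in force)

lemma coset_rep_eq_iff: "coset_rep a = coset_rep b \<longleftrightarrow> (\<exists>t \<in> fixed_field - {0}. a = t * b)"
proof
  assume "coset_rep a = coset_rep b"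
  moreover obtain s t where "s \<in> fixed_field - {0}" "coset_rep a = s * a"
    and "t \<in> fixed_field - {0}" "coset_rep b = t * b"
    using coset_rep by meson
  ultimately show "\<exists>t \<in> fixed_field - {0}. a = t * b"
    by (intro bexI[of _ "t / s"]) (auto simp: field_simps)
next
  assume "\<exists>t \<in> fixed_field - {0}. a = t * b"
  then obtain t where t: "t \<in> fixed_field - {0}" "a = t * b" ..
  have "(\<exists>s \<in> fixed_field - {0}. l = s * a) \<longleftrightarrow> (\<exists>s \<in> fixed_field - {0}. l = s * b)" for l
  proof
    assume "\<exists>s \<in> fixed_field - {0}. l = s * a"
    with t show "\<exists>s \<in> fixed_field - {0}. l = s * b"
      by (auto intro!: bexI[of _ "_ * t"] simp: mult.assoc)
  next
    assume "\<exists>s \<in> fixed_field - {0}. l = s * b"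
    with t show "\<exists>s \<in> fixed_field - {0}. l = s * a"
      by (auto intro!: bexI[of _ "_ / t"] simp: field_simps)
  qed
  then show "coset_rep a = coset_rep b"
    unfolding coset_rep_def by simp
qed

lemma coset_rep_coset_rep [simp]: "coset_rep (coset_rep a) = coset_rep a"
  using coset_rep[of a] coset_rep_eq_iff by blast

lemma coset_rep_eq_0_iff [simp]: "coset_rep a = 0 \<longleftrightarrow> a = 0"
  using coset_rep[of a] by auto

lemma coset_rep_0 [simp]: "coset_rep 0 = 0"
  by simp

lemma divide_coset_rep: "a / coset_rep a \<in> fixed_field"
  and mult_divide_coset_rep: "a = (a / coset_rep a) * coset_rep a"
proof -
  obtain t where "t \<in> fixed_field - {0}" "coset_rep a = t * a"
    using coset_rep by blast
  then show "a / coset_rep a \<in> fixed_field" "a = (a / coset_rep a) * coset_rep a"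
    by (cases "a = 0"; auto simp: fixed_field_inverse[of t, simplified])+
qed

end

locale cubic_additive_power = additive_power q field
  for q and field :: "'a::{field,finite} itself" +
  assumes card_UNIV: "card (UNIV :: 'a set) = q ^ 3"
    and odd_q: "odd q"
begin

lemma q_ge_3: "3 \<le> q"
proof -
  have "2 \<le> q ^ 3"
    using card_mono[of UNIV "{0, 1 :: 'a}"] card_UNIV by simp
  then have "1 < q"
    using power_le_one[of q 3] by (cases "q \<le> 1") auto
  then show ?thesis
    using odd_q by presburger
qed

lemma two_neq_zero: "(2::'a) \<noteq> 0"
  using two_neq_zero_if_odd_card[where ?'a = 'a] card_UNIV odd_q by simp

lemma power_power_power: "(((x::'a) ^ q) ^ q) ^ q = x"
  using power_card_UNIV_eq[of x] card_UNIV by (simp flip: power_mult add: power3_eq_cube)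

lemma card_fixed_field_le: "card fixed_field \<le> q"
proof -
  let ?p = "monom (1::'a) q - monom 1 1"
  have "coeff ?p q = 1"
    using q_ge_3 by (simp add: coeff_monom)
  then have "?p \<noteq> 0"
    by (metis coeff_0 zero_neq_one)
  moreover have "fixed_field \<subseteq> {x. poly ?p x = 0}"
    by (auto simp: fixed_field_def poly_monom)
  ultimately have "card fixed_field \<le> degree ?p"
    by (rule card_roots_le_degree)
  also have "degree ?p \<le> q"
    using q_ge_3 by (intro degree_diff_le) (auto intro: order.trans[OF degree_monom_le])
  finally show ?thesis .
qed

definition trace :: "'a \<Rightarrow> 'a" where
  "trace x = x + x ^ q + (x ^ q) ^ q"

lemma trace_in_fixed_field: "trace x \<in> fixed_field"
  using power_power_power[of x] by (simp add: fixed_field_def trace_def power_add ac_simps)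

lemma card_trace_fibre_le: "card {x. trace x = y} \<le> q^2"
proof -
  let ?p = "monom (1::'a) (q^2) + monom 1 q + monom 1 1 - monom y 0"
  have "q < q^2"
    using q_ge_3 by (simp add: power2_eq_square)
  then have "coeff ?p (q^2) = 1"
    using q_ge_3 by (simp add: coeff_monom)
  then have "?p \<noteq> 0"
    by (metis coeff_0 zero_neq_one)
  moreover have "{x. trace x = y} \<subseteq> {x. poly ?p x = 0}"
    by (auto simp: trace_def poly_monom power_mult[symmetric] power2_eq_square)
  ultimately have "card {x. trace x = y} \<le> degree ?p"
    by (rule card_roots_le_degree)
  also have "degree ?p \<le> q^2"
    using q_ge_3
    by (intro degree_diff_le degree_add_le)
      (auto intro: order.trans[OF degree_monom_le] simp: power2_eq_square)
  finally show ?thesis .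
qed

lemma card_fixed_field: "card fixed_field = q"
proof -
  have "(UNIV::'a set) = (\<Union>y\<in>fixed_field. {x. trace x = y})"
    using trace_in_fixed_field by auto
  then have "q ^ 3 \<le> (\<Sum>y\<in>fixed_field. card {x. trace x = y})"
    using card_UNIV card_UN_le[of fixed_field "\<lambda>y. {x. trace x = y}"] by simp
  also have "\<dots> \<le> card fixed_field * q^2"
    using sum_mono[of fixed_field "\<lambda>y. card {x. trace x = y}" "\<lambda>_. q^2"] card_trace_fibre_le
    by simp
  finally have "q * q^2 \<le> card fixed_field * q^2"
    by (simp add: power3_eq_cube power2_eq_square mult.assoc)
  then show ?thesis
    using card_fixed_field_le q_ge_3 by simp
qed

text \<open>The map \<open>x \<mapsto> x\<^sup>q\<close> permutes the roots of the quadratic; it cannot swap two distinct roots,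
  since its third power is the identity.\<close>

lemma quadratic_root_in_fixed_field:
  assumes "c\<^sub>0 \<in> fixed_field" and "c\<^sub>1 \<in> fixed_field" and root: "u^2 + c\<^sub>1 * u + c\<^sub>0 = 0"
  shows "u \<in> fixed_field"
proof -
  let ?v = "u ^ q"
  have c: "c\<^sub>0 ^ q = c\<^sub>0" "c\<^sub>1 ^ q = c\<^sub>1"
    using assms(1,2) by (auto simp: fixed_field_def)
  have "(u^2 + c\<^sub>1 * u + c\<^sub>0) ^ q = 0"
    using root q_pos by simp
  then have "?v^2 + c\<^sub>1 * ?v + c\<^sub>0 = 0"
    by (simp add: power_add power_mult_distrib c flip: power_mult) (simp add: mult.commute)
  moreover have "(?v - u) * (?v - (- c\<^sub>1 - u)) = (?v^2 + c\<^sub>1 * ?v + c\<^sub>0) - (u^2 + c\<^sub>1 * u + c\<^sub>0)"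
    by (simp add: algebra_simps power2_eq_square)
  ultimately have "(?v - u) * (?v - (- c\<^sub>1 - u)) = 0"
    using root by simp
  then consider "?v = u" | "?v = - c\<^sub>1 - u"
    by auto
  then show ?thesis
  proof cases
    case 2
    then have "?v ^ q = - c\<^sub>1 - ?v"
      using power_add[of "- c\<^sub>1" "- u"] power_uminus c by simp
    then have "(?v ^ q) ^ q = ?v"
      using 2 power_add[of "- c\<^sub>1" "- ?v"] power_uminus c by simp
    then show ?thesis
      using power_power_power[of u] by (simp add: fixed_field_def)
  qed (simp add: fixed_field_def)
qed

lemma card_coset:
  assumes "l \<noteq> 0"
  shows "card {a. coset_rep a = coset_rep l} = q - 1"
proof -
  have "{a. coset_rep a = coset_rep l} = (\<lambda>t. t * l) ` (fixed_field - {0})"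
    by (auto simp: coset_rep_eq_iff)
  moreover have "inj_on (\<lambda>t. t * l) (fixed_field - {0})"
    using assms by (auto simp: inj_on_def)
  ultimately show ?thesis
    using card_fixed_field by (simp add: card_image card_Diff_singleton)
qed

lemma card_range_coset_rep: "card (range coset_rep) = q^2 + q + 2"
proof -
  let ?R = "coset_rep ` (UNIV - {0})"
  have "q^3 - 1 = card (UNIV - {0::'a})"
    using card_UNIV by (simp add: card_Diff_singleton)
  also have "UNIV - {0} = (\<Union>l\<in>?R. {a. coset_rep a = l})"
    by auto
  also have "card \<dots> = (\<Sum>l\<in>?R. card {a. coset_rep a = l})"
    by (rule card_UN_disjoint) auto
  also have "\<dots> = (\<Sum>l\<in>?R. q - 1)"
    using card_coset by (intro sum.cong) auto
  finally have "card ?R * (q - 1) = (q^2 + q + 1) * (q - 1)"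
    using q_ge_3 by (cases q) (auto simp: power2_eq_square power3_eq_cube algebra_simps)
  then have "card ?R = q^2 + q + 1"
    using q_ge_3 mult_cancel2[of "card ?R" "q - 1" "q^2 + q + 1"] by simp
  moreover have "range coset_rep = insert 0 ?R" "0 \<notin> ?R"
    by (auto intro: image_eqI[of 0])
  ultimately show ?thesis
    by simp
qed

section \<open>Colouring \<open>core_adj\<close> over a cubic extension\<close>

definition translate_min :: "'a \<Rightarrow> 'a \<Rightarrow> nat" where
  "translate_min l z = Min (to_nat ` (\<lambda>t. z + l^2 * t) ` fixed_field)"

lemma translate_min_shift:
  assumes "s \<in> fixed_field"
  shows "translate_min l (z + l^2 * s) = translate_min l z"
proof -
  have "(+) s ` fixed_field = fixed_field"
  proof (intro equalityI subsetI)
    fix t assume "t \<in> fixed_field"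
    then show "t \<in> (+) s ` fixed_field"
      using assms by (intro image_eqI[of _ _ "t - s"]) auto
  qed (use assms in auto)
  then have "(\<lambda>t. z + l^2 * t) ` fixed_field = (\<lambda>t. z + l^2 * t) ` (+) s ` fixed_field"
    by simp
  also have "\<dots> = (\<lambda>t. z + l^2 * s + l^2 * t) ` fixed_field"
    by (simp add: image_image algebra_simps)
  finally have "(\<lambda>t. z + l^2 * s + l^2 * t) ` fixed_field = (\<lambda>t. z + l^2 * t) ` fixed_field" ..
  then show ?thesis
    by (simp add: translate_min_def)
qed

lemma translate_min_uminus_eqD:
  assumes "translate_min l z = translate_min l (- z)"
  shows "z \<in> (\<lambda>t. l^2 * t) ` fixed_field"
proof -
  have "\<exists>t \<in> fixed_field. translate_min l x = to_nat (x + l^2 * t)" for x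
  proof -
    have "translate_min l x \<in> to_nat ` (\<lambda>t. x + l^2 * t) ` fixed_field"
      unfolding translate_min_def by (rule Min_in) auto
    then show ?thesis
      by blast
  qed
  then obtain t\<^sub>1 t\<^sub>2 where "t\<^sub>1 \<in> fixed_field" "t\<^sub>2 \<in> fixed_field"
    and "translate_min l z = to_nat (z + l^2 * t\<^sub>1)"
    and "translate_min l (- z) = to_nat (- z + l^2 * t\<^sub>2)"
    by meson
  then have "z + l^2 * t\<^sub>1 = - z + l^2 * t\<^sub>2"
    using assms by simp
  then have "z = l^2 * ((t\<^sub>2 - t\<^sub>1) / 2)"
    using two_neq_zero by (auto simp: field_simps)
  moreover have "(t\<^sub>2 - t\<^sub>1) / 2 \<in> fixed_field"
    using \<open>t\<^sub>1 \<in> fixed_field\<close> \<open>t\<^sub>2 \<in> fixed_field\<close> fixed_field_add[OF fixed_field_one fixed_field_one]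
    by (auto simp: one_add_one)
  ultimately show ?thesis
    by blast
qed

lemma mem_scaled_fixed_fieldD:
  assumes "z \<in> (\<lambda>t. c * t) ` fixed_field"
  shows "z / c \<in> fixed_field" and "z = c * (z / c)"
  using assms by (cases "c = 0"; auto)+

lemma ratio_in_fixed_field_if_quadratic_relation:
  assumes "l \<noteq> 0" "m \<noteq> 0" "\<alpha> \<in> fixed_field" "\<tau> \<in> fixed_field" "\<alpha> \<noteq> 0"
    and sum: "\<tau> * l^2 + \<tau> * m^2 = \<alpha>^2 * l * m"
  shows "l / m \<in> fixed_field"
proof -
  have "\<tau> \<noteq> 0"
    using sum assms(1,2,5) by auto
  have "\<tau> * m^2 * ((l / m)^2 + (- (\<alpha>^2 / \<tau>)) * (l / m) + 1) = \<tau> * l^2 + \<tau> * m^2 - \<alpha>^2 * l * m"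
    using \<open>\<tau> \<noteq> 0\<close> \<open>m \<noteq> 0\<close> by (simp add: field_simps power2_eq_square)
  then have "\<tau> * m^2 * ((l / m)^2 + (- (\<alpha>^2 / \<tau>)) * (l / m) + 1) = 0"
    by (simp only: sum diff_self)
  then have "(l / m)^2 + (- (\<alpha>^2 / \<tau>)) * (l / m) + 1 = 0"
    using \<open>\<tau> \<noteq> 0\<close> \<open>m \<noteq> 0\<close> by simp
  moreover have "- (\<alpha>^2 / \<tau>) \<in> fixed_field"
    unfolding power2_eq_square using assms(3,4)
    by (intro fixed_field_uminus fixed_field_divide fixed_field_mult)
  ultimately show ?thesis
    using quadratic_root_in_fixed_field[OF fixed_field_one] by blast
qed

lemma eq_if_same_fixed_coordinates:
  assumes adj: "z + w = a * b"
    and "a / coset_rep a = b / coset_rep b" and "z / (coset_rep a)^2 = w / (coset_rep b)^2"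
    and "z \<in> (\<lambda>t. (coset_rep a)^2 * t) ` fixed_field"
    and "w \<in> (\<lambda>t. (coset_rep b)^2 * t) ` fixed_field"
  shows "a = b \<and> z = w"
proof -
  define l m \<alpha> \<tau> where "l = coset_rep a" "m = coset_rep b" "\<alpha> = a / l" "\<tau> = z / l^2"
  have a: "a = \<alpha> * l"
    unfolding l_m_\<alpha>_\<tau>_def by (rule mult_divide_coset_rep)
  have b: "b = \<alpha> * m"
    unfolding l_m_\<alpha>_\<tau>_def assms(2) by (rule mult_divide_coset_rep)
  have "\<alpha> \<in> fixed_field"
    unfolding l_m_\<alpha>_\<tau>_def by (rule divide_coset_rep)
  have z: "z = \<tau> * l^2"
    unfolding l_m_\<alpha>_\<tau>_def by (subst mult.commute) (rule mem_scaled_fixed_fieldD(2)[OF assms(4)])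
  have w: "w = \<tau> * m^2"
    unfolding l_m_\<alpha>_\<tau>_def assms(3)
    by (subst mult.commute) (rule mem_scaled_fixed_fieldD(2)[OF assms(5)])
  have "\<tau> \<in> fixed_field"
    unfolding l_m_\<alpha>_\<tau>_def by (rule mem_scaled_fixed_fieldD(1)[OF assms(4)])
  have "l = m"
  proof (cases "\<alpha> = 0")
    case True
    then have "a = 0" "b = 0"
      using a b by simp_all
    then show ?thesis
      unfolding l_m_\<alpha>_\<tau>_def(1,2) by simp
  next
    case False
    have "a \<noteq> 0" "b \<noteq> 0"
      using assms(2) False unfolding l_m_\<alpha>_\<tau>_def by auto
    then have "l \<noteq> 0" "m \<noteq> 0"
      unfolding l_m_\<alpha>_\<tau>_def(1,2) by simp_all
    moreover have "\<tau> * l^2 + \<tau> * m^2 = \<alpha>^2 * l * m"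
      using adj a b z w by (simp add: power2_eq_square mult_ac)
    ultimately have "l / m \<in> fixed_field"
      using \<open>\<alpha> \<in> fixed_field\<close> \<open>\<tau> \<in> fixed_field\<close> False
      by (intro ratio_in_fixed_field_if_quadratic_relation)
    then have "coset_rep l = coset_rep m"
      unfolding coset_rep_eq_iff using \<open>l \<noteq> 0\<close> \<open>m \<noteq> 0\<close> by (intro bexI[of _ "l / m"]) auto
    then show ?thesis
      unfolding l_m_\<alpha>_\<tau>_def(1,2) by simp
  qed
  then show ?thesis
    using a b z w by simp
qed

lemma translate_min_order_differs:
  assumes adj: "z + w = a * b" and "coset_rep a = l" and "coset_rep b = l"
    and "z \<notin> (\<lambda>t. l^2 * t) ` fixed_field"
  shows "(translate_min l z < translate_min l (- z)) \<noteq> (translate_min l w < translate_min l (- w))"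
proof -
  have "a = (a / l) * l" "a / l \<in> fixed_field"
    unfolding assms(2)[symmetric] by (rule mult_divide_coset_rep divide_coset_rep)+
  moreover have "b = (b / l) * l" "b / l \<in> fixed_field"
    unfolding assms(3)[symmetric] by (rule mult_divide_coset_rep divide_coset_rep)+
  ultimately obtain \<alpha> \<beta> where "a = \<alpha> * l" "b = \<beta> * l" "\<alpha> \<in> fixed_field" "\<beta> \<in> fixed_field"
    by blast
  define s where "s = \<alpha> * \<beta>"
  have "s \<in> fixed_field"
    using \<open>\<alpha> \<in> fixed_field\<close> \<open>\<beta> \<in> fixed_field\<close> by (auto simp: s_def)
  have "z + w = l^2 * s"
    using adj \<open>a = \<alpha> * l\<close> \<open>b = \<beta> * l\<close> by (simp add: s_def power2_eq_square mult_ac)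
  then have w: "w = - z + l^2 * s" and minus_w: "- w = z + l^2 * (- s)"
    by (simp_all add: algebra_simps)
  have "translate_min l w = translate_min l (- z)"
    unfolding w using \<open>s \<in> fixed_field\<close> by (rule translate_min_shift)
  moreover have "translate_min l (- w) = translate_min l z"
    unfolding minus_w using \<open>s \<in> fixed_field\<close> by (intro translate_min_shift fixed_field_uminus)
  moreover have "translate_min l z \<noteq> translate_min l (- z)"
    using translate_min_uminus_eqD assms(4) by blast
  ultimately show ?thesis
    by auto
qed

definition core_colour :: "'a \<times> 'a \<Rightarrow> ('a \<times> 'a) + (bool \<times> 'a)" where
  "core_colour v =
     (let l = coset_rep (fst v) in
      if snd v \<in> (\<lambda>t. l^2 * t) ` fixed_field then Inl (fst v / l, snd v / l^2)
      else Inr (translate_min l (snd v) < translate_min l (- snd v), l))"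

lemma core_colour_in_palette:
  "core_colour v \<in> Inl ` (fixed_field \<times> fixed_field) \<union> Inr ` (UNIV \<times> range coset_rep)"
  using divide_coset_rep mem_scaled_fixed_fieldD(1) by (auto simp: core_colour_def Let_def)

lemma core_colour_proper:
  assumes "core_adj u v"
  shows "core_colour u \<noteq> core_colour v"
proof
  obtain a z b w where u: "u = (a, z)" and v: "v = (b, w)"
    by fastforce
  have adj: "z + w = a * b" and "(a, z) \<noteq> (b, w)"
    using assms by (auto simp: core_adj_def u v)
  assume same: "core_colour u = core_colour v"
  show False
  proof (cases "z \<in> (\<lambda>t. (coset_rep a)^2 * t) ` fixed_field")
    case True
    with same have "a / coset_rep a = b / coset_rep b" "z / (coset_rep a)^2 = w / (coset_rep b)^2"
      "w \<in> (\<lambda>t. (coset_rep b)^2 * t) ` fixed_field"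
      by (auto simp: core_colour_def Let_def u v split: if_splits)
    then show False
      using eq_if_same_fixed_coordinates[OF adj] True \<open>(a, z) \<noteq> (b, w)\<close> by blast
  next
    case False
    with same have "coset_rep b = coset_rep a"
      and "(translate_min (coset_rep a) z < translate_min (coset_rep a) (- z))
        = (translate_min (coset_rep a) w < translate_min (coset_rep a) (- w))"
      by (auto simp: core_colour_def Let_def u v split: if_splits)
    then show False
      using translate_min_order_differs[OF adj refl _ False] by simp
  qed
qed

lemma colorable_core_adj: "colorable (UNIV :: ('a \<times> 'a) set) core_adj (6 * q^2)"
proof (rule colorable_of_palette[OF _ _ _ core_colour_proper])
  let ?P = "Inl ` (fixed_field \<times> fixed_field) \<union> Inr ` (UNIV \<times> range coset_rep)
    :: (('a \<times> 'a) + (bool \<times> 'a)) set"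
  show "finite ?P"
    by simp
  have "card ?P \<le> card (fixed_field \<times> fixed_field) + card (UNIV \<times> range coset_rep :: (bool \<times> 'a) set)"
    using card_Un_le card_image_le by (metis (no_types, lifting) add_mono finite order.trans)
  also have "\<dots> = q^2 + 2 * (q^2 + q + 2)"
    by (simp add: card_cartesian_product card_fixed_field card_range_coset_rep power2_eq_square)
  also have "\<dots> \<le> 6 * q^2"
  proof -
    have "3 * q \<le> q^2"
      using mult_le_mono1[OF q_ge_3, of q] by (simp add: power2_eq_square)
    then show ?thesis
      using q_ge_3 by presburger
  qed
  finally show "card ?P \<le> 6 * q^2" .
  show "range core_colour \<subseteq> ?P"
    using core_colour_in_palette by blast
qed

end

theorem theorem5p1:
  fixes q :: nat
  assumes "\<exists>p k. prime p \<and> odd p \<and> k \<ge> 1 \<and> q = p ^ k"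
    and "card (UNIV :: 'a::{field,finite} set) = q ^ 3"
  shows "chromatic_number (UNIV :: ('a \<times> 'a) set) G_adj \<le> 6 * q^2
       \<and> chromatic_number (ER_vertices :: ('a \<times> 'a \<times> 'a) set set) ER_adj \<le> 6 * q^2 + 1"
proof -
  obtain p k where p: "prime p" "odd p" and q: "q = p ^ k" "k \<ge> 1"
    using assms(1) by blast
  have "CHAR('a) = p"
    using CHAR_eq_if_card_UNIV_eq_prime_power[OF p(1)] assms(2) q(1) by (metis power_mult)
  interpret cubic_additive_power q "TYPE('a)"
  proof
    show "(x + y) ^ q = x ^ q + y ^ q" for x y :: 'a
      using freshmans_dream' \<open>CHAR('a) = p\<close> p(1) q(1) by blast
  qed (use assms(2) p q prime_gt_0_nat in auto)
  obtain a b :: 'a where "a^2 + b^2 = -1"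
    using minus_one_eq_sum_two_squares[where ?'a = 'a] card_UNIV odd_q by auto
  have "chromatic_number (UNIV :: ('a \<times> 'a) set) G_adj \<le> 6 * q^2"
    by (intro chromatic_number_le colorable_G_adj_if_core two_neq_zero colorable_core_adj)
  moreover have "chromatic_number (ER_vertices :: ('a \<times> 'a \<times> 'a) set set) ER_adj \<le> Suc (6 * q^2)"
    by (intro chromatic_number_le colorable_ER_adj_if_core[OF \<open>a^2 + b^2 = -1\<close> two_neq_zero]
        colorable_core_adj)
  ultimately show ?thesis
    by simp
qed

end
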